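(* Let $X\sim N(\mu,\Sigma)$ be a $p\times 1$ random vector with $\Sigma$ non-singular, and let $\hat\Sigma$ (from $n$ independent samples) be non-singular. Let $\Sigma_{\hat\Omega}=U^TV^*U/n$ with \[ V^*=(I_{p^2}+K)(\Sigma\otimes\Sigma),\qquad U=\big[\Sigma\otimes\Sigma\big]^{-1}\Big[(P_d^{-1/2}\otimes P_d^{-1/2})-\tfrac12(I_{p^2}+K)(I_p\otimes\Omega P_d^{-1})D\Big], \] and let $\rho^*=\frac{\mathrm{tr}(\Sigma_{\hat\Omega})}{\mathrm{tr}(\Sigma_{\hat\Omega})+\sum_{i=1}^p\lambda_i^2-p}$, where $\lambda_1,\dots,\lambda_p$ are the eigenvalues of $\Omega$, and suppose $0<\rho^*<1$. Define $\hat V^*$ and $\hat U$ by replacing $\Sigma,P_d,\Omega$ in $V^*,U$ by $\hat\Sigma,\hat P_d,\hat\Omega$, let $\widehat{\mathrm{tr}(\Sigma_{\hat\Omega})}=\mathrm{tr}(\hat U^T\hat V^*\hat U)/n$, and \[ \hat\rho^*=\frac{\widehat{\mathrm{tr}(\Sigma_{\hat\Omega})}}{\widehat{\mathrm{tr}(\Sigma_{\hat\Omega})}+\sum_{i=1}^p\hat\lambda_i^2-p}, \] where $\hat\lambda_1,\dots,\hat\lambda_p$ are the eigenvalues of $\hat\Omega$. Then $\hat\rho^*$ is an $n$-consistent estimator of $\rho^*$ (consistent as $n\to\infty$).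
   Context: $P=\Sigma^{-1}$, $P_d=\mathrm{dg}(P)$, $\Omega=P_d^{-1/2}PP_d^{-1/2}$. From independent samples $X_1,\dots,X_n$, $\hat\Sigma=\frac1n\sum_{i=1}^n(X_i-\bar X)(X_i-\bar X)^T$, $\hat P=\hat\Sigma^{-1}$, $\hat P_d=\mathrm{dg}(\hat P)$, $\hat\Omega=\hat P_d^{-1/2}\hat P\hat P_d^{-1/2}$. $\otimes$ is the Kronecker product. $K$ is the $p^2\times p^2$ commutation matrix $[E_{i,j}]_{i,j=1}^p$, with $E_{i,j}$ the $p\times p$ matrix having a 1 in position $(j,i)$ and 0 elsewhere ($K\mathrm{vec}(A)=\mathrm{vec}(A^T)$, $\mathrm{vec}$ stacking columns). $D=\sum_{i=1}^pE_{i,i}\otimes E_{i,i}$. *)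

theory Defs
  imports "HOL-Probability.Probability" "HOL-Computational_Algebra.Polynomial"
begin

text \<open>A pair (a,b) stands for position (a-1)p+b, so vec(A) at (j,i) is A_{ij}
  and the Kronecker product is (A \<otimes> B)_{(i,k),(j,l)} = A_{ij} B_{kl}.\<close>

definition kron :: "real^'p::finite^'p \<Rightarrow> real^'q::finite^'q \<Rightarrow> real^('p \<times> 'q)^('p \<times> 'q)" where
  "kron A B = (\<chi> r c. A $ fst r $ fst c * B $ snd r $ snd c)"

text \<open>Commutation matrix K = [E_{i,j}], E_{i,j} having a 1 in position (j,i).\<close>
definition commut :: "real^('p::finite \<times> 'p)^('p \<times> 'p)" where
  "commut = (\<chi> r c. if fst r = snd c \<and> snd r = fst c then 1 else 0)"

text \<open>D = sum_i E_{i,i} \<otimes> E_{i,i}.\<close>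
definition Dmat :: "real^('p::finite \<times> 'p)^('p \<times> 'p)" where
  "Dmat = (\<chi> r c. if fst r = snd r \<and> fst c = snd c \<and> fst r = fst c then 1 else 0)"

definition dg :: "real^'p::finite^'p \<Rightarrow> real^'p::finite^'p" where
  "dg A = (\<chi> i j. if i = j then A $ i $ j else 0)"

definition diag_powr :: "real^'p::finite^'p \<Rightarrow> real \<Rightarrow> real^'p::finite^'p" where
  "diag_powr A a = (\<chi> i j. if i = j then A $ i $ i powr a else 0)"

definition Omega_of :: "real^'p::finite^'p \<Rightarrow> real^'p::finite^'p" where
  "Omega_of S = (let P = matrix_inv S; Pd = dg P in diag_powr Pd (-1/2) ** P ** diag_powr Pd (-1/2))"

definition Vstar :: "real^'p::finite^'p \<Rightarrow> real^('p::finite \<times> 'p)^('p \<times> 'p)" where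
  "Vstar S = (mat 1 + commut) ** kron S S"

definition Umat :: "real^'p::finite^'p \<Rightarrow> real^('p::finite \<times> 'p)^('p \<times> 'p)" where
  "Umat S = (let P = matrix_inv S; Pd = dg P; Om = Omega_of S in
     matrix_inv (kron S S) **
       (kron (diag_powr Pd (-1/2)) (diag_powr Pd (-1/2))
        - (1/2) *\<^sub>R ((mat 1 + commut) ** kron (mat 1) (Om ** matrix_inv Pd) ** Dmat)))"

definition trSigOmega :: "real^'p::finite^'p \<Rightarrow> nat \<Rightarrow> real" where
  "trSigOmega S n = trace (transpose (Umat S) ** Vstar S ** Umat S) / real n"

definition charpoly :: "real^'p::finite^'p \<Rightarrow> real poly" where
  "charpoly A = det (\<chi> i j. (if i = j then [:0, 1:] else 0) - [:A $ i $ j:])"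

text \<open>Sum of squared eigenvalues, counted with algebraic multiplicity (over the complex roots
  of the characteristic polynomial; real part taken, all are real for symmetric A).\<close>
definition sum_sq_eigs :: "real^'p::finite^'p \<Rightarrow> real" where
  "sum_sq_eigs A = (let q = map_poly complex_of_real (charpoly A) in
     Re (\<Sum>z\<in>{z. poly q z = 0}. of_nat (order z q) * z ^ 2))"

definition rho_star :: "real^'p::finite^'p \<Rightarrow> nat \<Rightarrow> real" where
  "rho_star S n = trSigOmega S n /
     (trSigOmega S n + sum_sq_eigs (Omega_of S) - real CARD('p))"

definition mvn_density :: "real^'p \<Rightarrow> real^'p::finite^'p \<Rightarrow> real^'p \<Rightarrow> real" where
  "mvn_density mu S x =
     exp (- (1/2) * ((x - mu) \<bullet> (matrix_inv S *v (x - mu)))) / sqrt ((2 * pi) ^ CARD('p) * det S)"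

definition outer :: "real^'p \<Rightarrow> real^'p \<Rightarrow> real^'p::finite^'p" where
  "outer a b = (\<chi> i j. a $ i * b $ j)"

definition sample_cov :: "(nat \<Rightarrow> real^'p) \<Rightarrow> nat \<Rightarrow> real^'p::finite^'p" where
  "sample_cov x n = (let xbar = (1 / real n) *\<^sub>R (\<Sum>i<n. x i) in
     (1 / real n) *\<^sub>R (\<Sum>i<n. outer (x i - xbar) (x i - xbar)))"

definition conv_prob_zero :: "'a measure \<Rightarrow> (nat \<Rightarrow> 'a \<Rightarrow> real) \<Rightarrow> bool" where
  "conv_prob_zero M Y \<longleftrightarrow>
     (\<forall>e>0. (\<lambda>n. measure M {\<omega> \<in> space M. \<bar>Y n \<omega>\<bar> > e}) \<longlonglongrightarrow> 0)"

end

(*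
  Write T(S) = tr(U^T V U) (V being the paper's V-star) and c(S) = sum_i lambda_i^2 - p for the
  quantities of the paper evaluated at a covariance matrix S, so that
  rho_star(S, n) = (T/n) / (T/n + c) and n rho_star(S, n) = T / (T/n + c).  The hypothesis
  0 < rho_star < 1 forces T c > 0 at Sigma, and then (T', c') |-> T' / (h T' + c') is continuous
  at (T(Sigma), c(Sigma)) uniformly in h >= 0.  Both T and c are continuous at Sigma: T is built
  from continuous matrix operations, and sum_i lambda_i^2 = e_1^2 - 2 e_2 is a polynomial in two
  coefficients of the characteristic polynomial.  Hence n (rho_star(S, n) - rho_star(Sigma, n))
  is small as soon as S is entrywise close to Sigma.  The entries of the sample covariance are
  polynomials in the sample moments about mu, which converge in probability by the weak law of
  large numbers; the Gaussian moments this needs are read off the moment generating function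
  exp (t^T Sigma t / 2), computed by completing the square.
*)

theory Submission
  imports Defs "HOL-Computational_Algebra.Fundamental_Theorem_Algebra"
begin

section \<open>Sums of squared eigenvalues\<close>

lemma sum_mset_image_eq_sum_count:
  fixes f :: "'a \<Rightarrow> 'b::comm_semiring_1"
  shows "(\<Sum>x\<in>#M. f x) = (\<Sum>x\<in>set_mset M. of_nat (count M x) * f x)"
proof (induction M)
  case (add a M)
  have "(\<Sum>x\<in>set_mset (add_mset a M). of_nat (count (add_mset a M) x) * f x)
      = (\<Sum>x\<in>insert a (set_mset M). of_nat (count M x) * f x + (if x = a then f x else 0))"
    by (intro sum.cong) (auto simp: algebra_simps)
  also have "\<dots> = (\<Sum>x\<in>insert a (set_mset M). of_nat (count M x) * f x) + f a"
    by (simp add: sum.distrib)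
  also have "(\<Sum>x\<in>insert a (set_mset M). of_nat (count M x) * f x)
      = (\<Sum>x\<in>set_mset M. of_nat (count M x) * f x)"
    by (cases "a \<in># M") (auto simp: insert_absorb not_in_iff)
  finally show ?case using add by (simp add: add.commute)
qed simp

lemma coeffs_prod_linear_factors:
  fixes A :: "'a::idom multiset"
  defines "P \<equiv> \<Prod>x\<in>#A. [:-x, 1:]"
  shows "coeff P (size A) = 1" "degree P = size A"
    "size A \<ge> 1 \<Longrightarrow> coeff P (size A - 1) = - (\<Sum>x\<in>#A. x)"
    "size A \<ge> 2 \<Longrightarrow> 2 * coeff P (size A - 2) = (\<Sum>x\<in>#A. x)^2 - (\<Sum>x\<in>#A. x^2)"
  unfolding P_def
proof (induction A)
  case (add a A)
  let ?Q = "\<Prod>x\<in>#A. [:-x, 1:]" and ?n = "size A"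
  have cf: "coeff ([:-a, 1:] * ?Q) (Suc k) = coeff ?Q k - a * coeff ?Q (Suc k)" for k
    by simp
  have "coeff ?Q (Suc ?n) = 0" using add.IH(2) by (simp add: coeff_eq_0)
  then show "coeff (\<Prod>x\<in>#add_mset a A. [:-x, 1:]) (size (add_mset a A)) = 1"
    using cf[of ?n] add.IH(1) by simp
  have "?Q \<noteq> 0" using add.IH(1) by auto
  then have "degree ([:-a, 1:] * ?Q) = Suc ?n" using add.IH(2) by (subst degree_mult_eq) auto
  then show "degree (\<Prod>x\<in>#add_mset a A. [:-x, 1:]) = size (add_mset a A)" by simp
  show "coeff (\<Prod>x\<in>#add_mset a A. [:-x, 1:]) (size (add_mset a A) - 1) = - (\<Sum>x\<in>#add_mset a A. x)"
    using cf[of "?n - 1"] add.IH(1,3) by (cases ?n) (simp_all add: algebra_simps)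
  show "2 * coeff (\<Prod>x\<in>#add_mset a A. [:-x, 1:]) (size (add_mset a A) - 2)
      = (\<Sum>x\<in>#add_mset a A. x)^2 - (\<Sum>x\<in>#add_mset a A. x^2)"
    if "size (add_mset a A) \<ge> 2"
  proof (cases "?n = 1")
    case True
    then obtain b where "A = {#b#}" by (metis size_1_singleton_mset)
    then show ?thesis by (simp add: power2_eq_square algebra_simps)
  next
    case False
    then have "?n \<ge> 2" using that by simp
    then show ?thesis
      using cf[of "?n - 2"] add.IH(3,4)
      by (simp add: numeral_2_eq_2 Suc_diff_Suc power2_eq_square algebra_simps)
  qed
qed simp_all

definition char_matrix :: "real^'n::finite^'n \<Rightarrow> real poly^'n^'n" where
  "char_matrix A = (\<chi> i j. (if i = j then [:0, 1:] else 0) - [:A $ i $ j:])"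

lemma charpoly_eq_det_char_matrix: "charpoly A = det (char_matrix A)"
  by (simp add: charpoly_def char_matrix_def)

lemma degree_char_matrix_le: "degree (char_matrix A $ i $ j) \<le> 1"
  by (auto simp: char_matrix_def degree_diff_le)

lemma prod_degree_le_one:
  fixes f :: "'i \<Rightarrow> 'a::comm_ring_1 poly"
  assumes "finite I" "\<And>i. i \<in> I \<Longrightarrow> degree (f i) \<le> 1"
  shows "degree (\<Prod>i\<in>I. f i) \<le> card I \<and> coeff (\<Prod>i\<in>I. f i) (card I) = (\<Prod>i\<in>I. coeff (f i) 1)"
  using assms
proof (induction I rule: finite_induct)
  case (insert x F)
  let ?g = "\<Prod>i\<in>F. f i"
  have fx: "f x = [:coeff (f x) 0, coeff (f x) 1:]"
    using insert.prems[of x] by (auto simp: poly_eq_iff coeff_pCons coeff_eq_0 split: nat.splits)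
  have "degree (f x * ?g) \<le> Suc (card F)"
    using degree_mult_le[of "f x" ?g] insert by fastforce
  moreover have "coeff (f x * ?g) (Suc (card F)) = coeff (f x) 1 * coeff ?g (card F)"
    using insert by (subst fx) (simp add: coeff_eq_0)
  ultimately show ?case using insert by simp
qed simp

lemma charpoly_monic:
  fixes A :: "real^'n::finite^'n"
  shows "degree (charpoly A) = CARD('n)" "coeff (charpoly A) CARD('n) = 1"
proof -
  have P: "degree (\<Prod>i\<in>UNIV. char_matrix A $ i $ p i) \<le> CARD('n) \<and>
      coeff (\<Prod>i\<in>UNIV. char_matrix A $ i $ p i) CARD('n)
        = (\<Prod>i\<in>UNIV. coeff (char_matrix A $ i $ p i) 1)" for p
    by (rule prod_degree_le_one[OF _ degree_char_matrix_le]) simp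
  have "degree (charpoly A) \<le> CARD('n)"
    unfolding charpoly_eq_det_char_matrix det_def
    using P by (intro degree_sum_le) (auto simp: of_int_poly intro: order_trans[OF degree_smult_le])
  moreover have "coeff (charpoly A) CARD('n) = det (\<chi> i j. coeff (char_matrix A $ i $ j) 1)"
    unfolding charpoly_eq_det_char_matrix det_def by (simp add: coeff_sum of_int_poly P)
  moreover have "(\<chi> i j. coeff (char_matrix A $ i $ j) 1) = (mat 1 :: real^'n^'n)"
    by (simp add: char_matrix_def mat_def vec_eq_iff)
  ultimately show "coeff (charpoly A) CARD('n) = 1" by simp
  with \<open>degree (charpoly A) \<le> CARD('n)\<close> show "degree (charpoly A) = CARD('n)"
    by (simp add: antisym le_degree)
qed

lemma tendsto_coeff_prod:
  fixes f :: "'i \<Rightarrow> 'b \<Rightarrow> real poly"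
  assumes "finite I" "\<And>i k. i \<in> I \<Longrightarrow> ((\<lambda>x. coeff (f i x) k) \<longlongrightarrow> coeff (g i) k) F"
  shows "((\<lambda>x. coeff (\<Prod>i\<in>I. f i x) k) \<longlongrightarrow> coeff (\<Prod>i\<in>I. g i) k) F"
  using assms
proof (induction I arbitrary: k rule: finite_induct)
  case (insert i I)
  then show ?case by (simp add: coeff_mult, intro tendsto_intros) auto
qed simp

lemma tendsto_charpoly_coeff [tendsto_intros]:
  assumes "(G \<longlongrightarrow> (A::real^'n::finite^'n)) F"
  shows "((\<lambda>x. coeff (charpoly (G x)) k) \<longlongrightarrow> coeff (charpoly A) k) F"
proof -
  have "((\<lambda>x. coeff (char_matrix (G x) $ i $ j) k) \<longlongrightarrow> coeff (char_matrix A $ i $ j) k) F" for i j k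
    using tendsto_vec_nth[OF tendsto_vec_nth[OF assms]]
    by (cases k) (simp_all add: char_matrix_def tendsto_minus)
  then show ?thesis
    unfolding charpoly_eq_det_char_matrix det_def
    by (simp add: coeff_sum of_int_poly, intro tendsto_intros tendsto_coeff_prod) auto
qed

lemma sum_sq_eigs_eq_charpoly_coeffs:
  fixes A :: "real^'n::finite^'n"
  defines "c k \<equiv> coeff (charpoly A) (CARD('n) - k)"
  shows "sum_sq_eigs A = (c 1)^2 - 2 * (if CARD('n) \<ge> 2 then c 2 else 0)"
proof -
  define q where "q = map_poly complex_of_real (charpoly A)"
  define R where "R = proots q"
  have cq: "coeff q k = of_real (coeff (charpoly A) k)" for k
    by (simp add: q_def coeff_map_poly)
  have degq: "degree q = CARD('n)"
    using charpoly_monic(1)[of A] by (simp add: q_def degree_map_poly)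
  have lq: "lead_coeff q = 1"
    using charpoly_monic(2)[of A] by (simp add: degq cq)
  then have q0: "q \<noteq> 0" by auto
  have qR: "q = (\<Prod>x\<in>#R. [:-x, 1:])"
    using complex_poly_decompose_multiset[of q] lq by (simp add: R_def)
  have sR: "size R = CARD('n)"
    using size_proots_complex[of q] degq by (simp add: R_def)
  have "(\<Sum>z\<in>{z. poly q z = 0}. of_nat (order z q) * z ^ 2) = (\<Sum>x\<in>#R. x^2)"
    using q0 by (simp add: R_def sum_mset_image_eq_sum_count)
  also have "\<dots> = (coeff q (CARD('n) - 1))^2 - 2 * (if CARD('n) \<ge> 2 then coeff q (CARD('n) - 2) else 0)"
  proof (cases "CARD('n) \<ge> 2")
    case True
    then show ?thesis
      using coeffs_prod_linear_factors(3,4)[of R] sR qR by (simp add: power2_eq_square algebra_simps)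
  next
    case False
    have "CARD('n) > 0" by (simp add: card_gt_0_iff)
    with False sR have "size R = 1" by linarith
    then obtain b where "R = {#b#}" using size_1_singleton_mset by blast
    then show ?thesis using qR False by simp
  qed
  finally show ?thesis
    unfolding sum_sq_eigs_def Let_def q_def[symmetric] c_def cq by (simp add: power2_eq_square)
qed

lemma tendsto_sum_sq_eigs [tendsto_intros]:
  assumes "(G \<longlongrightarrow> (A::real^'n::finite^'n)) F"
  shows "((\<lambda>x. sum_sq_eigs (G x)) \<longlongrightarrow> sum_sq_eigs A) F"
proof -
  have "((\<lambda>x. if CARD('n) \<ge> 2 then coeff (charpoly (G x)) k else 0)
      \<longlongrightarrow> (if CARD('n) \<ge> 2 then coeff (charpoly A) k else 0)) F" for k
    using assms by (simp add: tendsto_charpoly_coeff)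
  then show ?thesis
    unfolding sum_sq_eigs_eq_charpoly_coeffs using assms by (intro tendsto_intros)
qed

section \<open>Continuity of matrix operations\<close>

lemma matrix_inv_right:
  fixes A :: "'a::semiring_1^'n^'m"
  shows "invertible A \<Longrightarrow> A ** matrix_inv A = mat 1"
  unfolding invertible_def matrix_inv_def by (rule someI2_ex) auto

lemma matrix_inv_left:
  fixes A :: "'a::semiring_1^'n^'m"
  shows "invertible A \<Longrightarrow> matrix_inv A ** A = mat 1"
  unfolding invertible_def matrix_inv_def by (rule someI2_ex) auto

lemma matrix_inv_cramer:
  fixes A :: "real^'n::finite^'n"
  assumes "det A \<noteq> 0"
  shows "matrix_inv A = (\<chi> j k. det (\<chi> i l. if l = j then axis k 1 $ i else A $ i $ l) / det A)"
proof -
  have "A *v (matrix_inv A *v axis k 1) = axis k 1" for k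
    using assms matrix_inv_right[of A]
    by (simp add: matrix_vector_mul_assoc invertible_det_nz matrix_vector_mul_lid)
  then have "matrix_inv A *v axis k 1
      = (\<chi> j. det (\<chi> i l. if l = j then axis k 1 $ i else A $ i $ l) / det A)" for k
    using cramer[OF assms] by blast
  then show ?thesis
    by (simp add: vec_eq_iff matrix_vector_mult_basis column_def)
qed

lemma tendsto_det [tendsto_intros]:
  fixes G :: "'b \<Rightarrow> real^'n::finite^'n"
  shows "(G \<longlongrightarrow> A) F \<Longrightarrow> ((\<lambda>x. det (G x)) \<longlongrightarrow> det A) F"
  unfolding det_def by (intro tendsto_intros)

lemma tendsto_matrix_inv [tendsto_intros]:
  fixes G :: "'b \<Rightarrow> real^'n::finite^'n"
  assumes G: "(G \<longlongrightarrow> A) F" and A: "det A \<noteq> 0"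
  shows "((\<lambda>x. matrix_inv (G x)) \<longlongrightarrow> matrix_inv A) F"
proof -
  have "((\<lambda>x. \<chi> j k. det (\<chi> i l. if l = j then axis k 1 $ i else G x $ i $ l) / det (G x))
      \<longlongrightarrow> matrix_inv A) F"
    unfolding matrix_inv_cramer[OF A] using G A tendsto_vec_nth[OF tendsto_vec_nth[OF G]]
    by (intro tendsto_intros) auto
  moreover have "eventually (\<lambda>x.
      (\<chi> j k. det (\<chi> i l. if l = j then axis k 1 $ i else G x $ i $ l) / det (G x)) = matrix_inv (G x)) F"
    using tendsto_imp_eventually_ne[OF tendsto_det[OF G] A]
    by eventually_elim (simp add: matrix_inv_cramer)
  ultimately show ?thesis
    by (rule Lim_transform_eventually)
qed

lemma tendsto_matrix_mult [tendsto_intros]: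
  fixes f :: "'b \<Rightarrow> real^'n::finite^'m::finite" and g :: "'b \<Rightarrow> real^'k::finite^'n"
  shows "(f \<longlongrightarrow> a) F \<Longrightarrow> (g \<longlongrightarrow> b) F \<Longrightarrow> ((\<lambda>x. f x ** g x) \<longlongrightarrow> a ** b) F"
  unfolding matrix_matrix_mult_def by (intro tendsto_intros)

lemma tendsto_transpose [tendsto_intros]:
  fixes f :: "'b \<Rightarrow> real^'n::finite^'m::finite"
  shows "(f \<longlongrightarrow> a) F \<Longrightarrow> ((\<lambda>x. transpose (f x)) \<longlongrightarrow> transpose a) F"
  unfolding transpose_def by (intro tendsto_intros)

lemma tendsto_trace [tendsto_intros]:
  fixes f :: "'b \<Rightarrow> real^'n::finite^'n"
  shows "(f \<longlongrightarrow> a) F \<Longrightarrow> ((\<lambda>x. trace (f x)) \<longlongrightarrow> trace a) F"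
  unfolding trace_def by (intro tendsto_intros)

lemma tendsto_kron [tendsto_intros]:
  fixes f :: "'b \<Rightarrow> real^'n::finite^'n" and g :: "'b \<Rightarrow> real^'m::finite^'m"
  shows "(f \<longlongrightarrow> a) F \<Longrightarrow> (g \<longlongrightarrow> b) F \<Longrightarrow> ((\<lambda>x. kron (f x) (g x)) \<longlongrightarrow> kron a b) F"
  unfolding kron_def by (intro tendsto_intros)

lemma tendsto_dg [tendsto_intros]:
  fixes f :: "'b \<Rightarrow> real^'n::finite^'n"
  shows "(f \<longlongrightarrow> a) F \<Longrightarrow> ((\<lambda>x. dg (f x)) \<longlongrightarrow> dg a) F"
  unfolding dg_def by (intro tendsto_vec_lambda) (simp add: tendsto_vec_nth)

lemma tendsto_diag_powr [tendsto_intros]: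
  fixes f :: "'b \<Rightarrow> real^'n::finite^'n"
  assumes "(f \<longlongrightarrow> a) F" "\<And>i. a $ i $ i > 0"
  shows "((\<lambda>x. diag_powr (f x) r) \<longlongrightarrow> diag_powr a r) F"
  unfolding diag_powr_def
proof (intro tendsto_vec_lambda)
  fix i j :: 'n
  have "((\<lambda>x. f x $ i $ i powr r) \<longlongrightarrow> a $ i $ i powr r) F"
    using assms(2)[of i] by (intro tendsto_intros tendsto_vec_nth assms(1)) auto
  then show "((\<lambda>x. if i = j then f x $ i $ i powr r else 0) \<longlongrightarrow> (if i = j then a $ i $ i powr r else 0)) F"
    by (cases "i = j") simp_all
qed

definition posdef :: "real^'n::finite^'n \<Rightarrow> bool" where
  "posdef A \<longleftrightarrow> (\<forall>x. x \<noteq> 0 \<longrightarrow> x \<bullet> (A *v x) > 0)"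

lemma posdef_invertible:
  assumes "posdef A"
  shows "invertible A"
proof -
  have "inj ((*v) A)"
  proof (rule injI)
    fix x y assume "A *v x = A *v y"
    then have "(x - y) \<bullet> (A *v (x - y)) = 0" by (simp add: matrix_vector_mult_diff_distrib)
    then show "x = y" using assms unfolding posdef_def by (metis less_irrefl eq_iff_diff_eq_0)
  qed
  then show ?thesis using invertible_left_inverse matrix_left_invertible_injective by blast
qed

lemma posdef_matrix_inv_diag_pos:
  assumes "posdef A"
  shows "matrix_inv A $ i $ i > 0"
proof -
  define x where "x = matrix_inv A *v axis i 1"
  have Ax: "A *v x = axis i 1"
    using matrix_inv_right[OF posdef_invertible[OF assms]]
    by (simp add: x_def matrix_vector_mul_assoc matrix_vector_mul_lid)
  then have "x \<noteq> 0" by (auto simp: axis_eq_0_iff)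
  then have "x \<bullet> (A *v x) > 0" using assms by (simp add: posdef_def)
  also have "x \<bullet> (A *v x) = x $ i"
    by (simp add: Ax inner_axis)
  also have "\<dots> = matrix_inv A $ i $ i"
    by (simp add: x_def matrix_vector_mult_basis column_def)
  finally show ?thesis .
qed

lemma kron_matrix_mult: "kron A B ** kron C D = kron (A ** C) (B ** D)"
  by (simp add: kron_def matrix_matrix_mult_def vec_eq_iff sum_product sum.cartesian_product
      case_prod_beta algebra_simps)

lemma kron_mat_1: "kron (mat 1 :: real^'n::finite^'n) (mat 1 :: real^'m::finite^'m) = mat 1"
  by (auto simp: kron_def mat_def vec_eq_iff prod_eq_iff)

lemma invertible_kron:
  fixes A :: "real^'n::finite^'n" and B :: "real^'m::finite^'m"
  assumes "invertible A" "invertible B"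
  shows "invertible (kron A B)"
  unfolding invertible_def using assms
  by (intro exI[of _ "kron (matrix_inv A) (matrix_inv B)"])
     (simp add: kron_matrix_mult kron_mat_1 matrix_inv_left matrix_inv_right)

section \<open>The shrinkage intensity as a function of the covariance matrix\<close>

definition trUVU :: "real^'p::finite^'p \<Rightarrow> real" where
  "trUVU S = trace (transpose (Umat S) ** Vstar S ** Umat S)"

definition eig_sq_excess :: "real^'p::finite^'p \<Rightarrow> real" where
  "eig_sq_excess S = sum_sq_eigs (Omega_of S) - real CARD('p)"

lemma rho_star_eq: "rho_star S n = (trUVU S / real n) / (trUVU S / real n + eig_sq_excess S)"
  by (simp add: rho_star_def trSigOmega_def trUVU_def eig_sq_excess_def)

lemma posdef_det_dg_matrix_inv_pos:
  assumes "posdef A"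
  shows "det (dg (matrix_inv A)) > 0"
  by (subst det_diagonal) (auto simp: dg_def intro!: prod_pos posdef_matrix_inv_diag_pos[OF assms])

lemma tendsto_Omega_of:
  assumes "posdef A" "(G \<longlongrightarrow> A) F"
  shows "((\<lambda>x. Omega_of (G x)) \<longlongrightarrow> Omega_of A) F"
  unfolding Omega_of_def Let_def
  using assms posdef_invertible[OF assms(1)] posdef_matrix_inv_diag_pos[OF assms(1)]
  by (intro tendsto_intros) (auto simp: dg_def invertible_det_nz)

lemma isCont_eig_sq_excess: "posdef A \<Longrightarrow> isCont eig_sq_excess A"
  unfolding isCont_def eig_sq_excess_def by (intro tendsto_intros tendsto_Omega_of tendsto_ident_at)

lemma isCont_trUVU:
  assumes "posdef A"
  shows "isCont trUVU A"
proof -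
  have "invertible (kron A A)"
    using posdef_invertible[OF assms] by (intro invertible_kron)
  then show ?thesis
    unfolding isCont_def trUVU_def Umat_def Vstar_def Let_def
    using assms posdef_invertible[OF assms] posdef_matrix_inv_diag_pos[OF assms]
      posdef_det_dg_matrix_inv_pos[OF assms]
    by (intro tendsto_intros tendsto_Omega_of tendsto_ident_at) (auto simp: dg_def invertible_det_nz)
qed

lemma ratio_bounds_imp_same_sign:
  fixes T c :: real
  assumes "0 < T / (T + c)" "T / (T + c) < 1"
  shows "T * c > 0"
  using assms by (cases "T + c > 0") (auto simp: zero_less_divide_iff divide_less_eq zero_less_mult_iff)

lemma abs_le_abs_add_same_sign:
  fixes x y :: real
  shows "0 \<le> x * y \<Longrightarrow> \<bar>y\<bar> \<le> \<bar>x + y\<bar>"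
  by (auto simp: zero_le_mult_iff)

text \<open>Uniformity in \<open>h = 1 / n\<close> is what absorbs the factor \<open>n\<close> in \<open>n (rho-hat - rho)\<close>.\<close>

lemma ratio_equicontinuous:
  fixes T c e :: real
  assumes Tc: "T * c > 0" and e: "e > 0"
  obtains d where "d > 0"
    "\<And>T' c' h. \<bar>T' - T\<bar> < d \<Longrightarrow> \<bar>c' - c\<bar> < d \<Longrightarrow> 0 \<le> h \<Longrightarrow>
       \<bar>T' / (h * T' + c') - T / (h * T + c)\<bar> < e"
proof
  have c: "c \<noteq> 0" using Tc by auto
  define d where "d = min (min \<bar>T\<bar> \<bar>c\<bar> / 2) (e * c^2 / (4 * (\<bar>c\<bar> + \<bar>T\<bar>)))"
  show "d > 0" using Tc e by (auto simp: d_def zero_less_mult_iff)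
  fix T' c' h :: real
  assume T': "\<bar>T' - T\<bar> < d" and c': "\<bar>c' - c\<bar> < d" and h: "0 \<le> h"
  have "d \<le> \<bar>T\<bar> / 2" "d \<le> \<bar>c\<bar> / 2" unfolding d_def by linarith+
  then have same_sign: "T' * T > 0" "c' * c > 0" and "\<bar>c'\<bar> \<ge> \<bar>c\<bar> / 2"
    using T' c' by (auto simp: abs_if zero_less_mult_iff split: if_splits)
  have "T' * c' > 0"
    using same_sign Tc by (auto simp: zero_less_mult_iff)
  have growth: "\<bar>c\<bar> \<le> \<bar>h * T + c\<bar>" "\<bar>c'\<bar> \<le> \<bar>h * T' + c'\<bar>"
    using Tc \<open>T' * c' > 0\<close> h by (simp_all add: abs_le_abs_add_same_sign mult.assoc)
  then have "h * T + c \<noteq> 0" "h * T' + c' \<noteq> 0"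
    using c \<open>T' * c' > 0\<close> by auto
  from growth \<open>\<bar>c'\<bar> \<ge> \<bar>c\<bar> / 2\<close> have "\<bar>c\<bar> / 2 * \<bar>c\<bar> \<le> \<bar>h * T' + c'\<bar> * \<bar>h * T + c\<bar>"
    by (intro mult_mono) auto
  then have den: "c^2 / 2 \<le> \<bar>(h * T' + c') * (h * T + c)\<bar>"
    by (simp add: abs_mult power2_eq_square)
  have "\<bar>T' * c - T * c'\<bar> = \<bar>(T' - T) * c - T * (c' - c)\<bar>" by (simp add: algebra_simps)
  also have "\<dots> \<le> \<bar>T' - T\<bar> * \<bar>c\<bar> + \<bar>T\<bar> * \<bar>c' - c\<bar>" by (metis abs_mult abs_triangle_ineq4)
  also have "\<dots> \<le> d * \<bar>c\<bar> + \<bar>T\<bar> * d"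
    using T' c' by (intro add_mono mult_right_mono mult_left_mono) auto
  finally have num: "\<bar>T' * c - T * c'\<bar> \<le> d * (\<bar>c\<bar> + \<bar>T\<bar>)" by (simp add: algebra_simps)
  have "T' / (h * T' + c') - T / (h * T + c) = (T' * c - T * c') / ((h * T' + c') * (h * T + c))"
    using \<open>h * T + c \<noteq> 0\<close> \<open>h * T' + c' \<noteq> 0\<close> by (simp add: field_simps)
  also have "\<bar>\<dots>\<bar> \<le> d * (\<bar>c\<bar> + \<bar>T\<bar>) / (c^2 / 2)"
    unfolding abs_divide using num den c by (intro frac_le) auto
  also have "\<dots> \<le> e / 2"
  proof -
    have "d \<le> e * c^2 / (4 * (\<bar>c\<bar> + \<bar>T\<bar>))" unfolding d_def by (rule min.cobounded2)
    moreover have "\<bar>c\<bar> + \<bar>T\<bar> > 0" "c^2 > 0" using c by auto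
    ultimately show ?thesis by (simp add: field_simps)
  qed
  finally show "\<bar>T' / (h * T' + c') - T / (h * T + c)\<bar> < e" using e by simp
qed

lemma rho_star_equicontinuous:
  fixes Sigma :: "real^'p::finite^'p"
  assumes pd: "posdef Sigma" and rho: "0 < rho_star Sigma 1" "rho_star Sigma 1 < 1" and e: "e > 0"
  obtains d where "d > 0" "\<And>n S. dist S Sigma < d \<Longrightarrow> \<bar>real n * (rho_star S n - rho_star Sigma n)\<bar> < e"
proof -
  let ?T = "trUVU Sigma" and ?c = "eig_sq_excess Sigma"
  have "?T * ?c > 0"
    using rho by (intro ratio_bounds_imp_same_sign) (simp_all add: rho_star_eq)
  then obtain \<eta> where \<eta>: "\<eta> > 0" and close: "\<And>T' c' h. \<bar>T' - ?T\<bar> < \<eta> \<Longrightarrow> \<bar>c' - ?c\<bar> < \<eta> \<Longrightarrow> 0 \<le> h \<Longrightarrow>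
       \<bar>T' / (h * T' + c') - ?T / (h * ?T + ?c)\<bar> < e"
    using ratio_equicontinuous e by blast
  obtain d1 where d1: "d1 > 0" "\<And>S. dist S Sigma < d1 \<Longrightarrow> \<bar>trUVU S - ?T\<bar> < \<eta>"
    using isCont_trUVU[OF pd] \<eta> unfolding continuous_at_eps_delta dist_real_def by blast
  obtain d2 where d2: "d2 > 0" "\<And>S. dist S Sigma < d2 \<Longrightarrow> \<bar>eig_sq_excess S - ?c\<bar> < \<eta>"
    using isCont_eig_sq_excess[OF pd] \<eta> unfolding continuous_at_eps_delta dist_real_def by blast
  have scaled: "real n * rho_star S n = trUVU S / (inverse (real n) * trUVU S + eig_sq_excess S)"
    if "n > 0" for n and S :: "real^'p^'p"
    using that by (simp add: rho_star_eq divide_inverse_commute)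
  show ?thesis
  proof
    show "min d1 d2 > 0" using d1 d2 by simp
    fix n and S :: "real^'p^'p"
    assume "dist S Sigma < min d1 d2"
    then show "\<bar>real n * (rho_star S n - rho_star Sigma n)\<bar> < e"
      using e d1 d2 close[of "trUVU S" "eig_sq_excess S" "inverse (real n)"]
      by (cases "n = 0") (simp_all add: right_diff_distrib scaled)
  qed
qed

lemma dist_matrix_le_sum_abs:
  fixes A B :: "real^'n::finite^'m::finite"
  shows "dist A B \<le> (\<Sum>i\<in>UNIV. \<Sum>j\<in>UNIV. \<bar>A $ i $ j - B $ i $ j\<bar>)"
proof -
  have "dist A B \<le> (\<Sum>i\<in>UNIV. norm ((A - B) $ i))"
    unfolding dist_norm norm_vec_def by (rule L2_set_le_sum) simp
  also have "\<dots> \<le> (\<Sum>i\<in>UNIV. \<Sum>j\<in>UNIV. \<bar>A $ i $ j - B $ i $ j\<bar>)"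
    by (intro sum_mono order_trans[OF norm_le_l1_cart]) simp
  finally show ?thesis .
qed

lemma dist_matrix_less_entrywise:
  fixes A B :: "real^'n::finite^'m::finite"
  assumes "\<And>i j. \<bar>A $ i $ j - B $ i $ j\<bar> < d"
  shows "dist A B < real (CARD('m) * CARD('n)) * d"
proof -
  have "(\<Sum>i\<in>UNIV. \<Sum>j\<in>UNIV. \<bar>A $ i $ j - B $ i $ j\<bar>) < (\<Sum>i\<in>(UNIV::'m set). \<Sum>j\<in>(UNIV::'n set). d)"
    using assms by (intro sum_strict_mono) auto
  then show ?thesis using dist_matrix_le_sum_abs[of A B] by simp
qed

lemma rho_star_entrywise_equicontinuous:
  fixes Sigma :: "real^'p::finite^'p"
  assumes "posdef Sigma" "0 < rho_star Sigma 1" "rho_star Sigma 1 < 1" "e > 0"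
  obtains d where "d > 0"
    "\<And>n S. (\<And>i j. \<bar>S $ i $ j - Sigma $ i $ j\<bar> < d) \<Longrightarrow> \<bar>real n * (rho_star S n - rho_star Sigma n)\<bar> < e"
proof -
  obtain d where "d > 0" and close: "\<And>n S. dist S Sigma < d \<Longrightarrow> \<bar>real n * (rho_star S n - rho_star Sigma n)\<bar> < e"
    using rho_star_equicontinuous[OF assms] by blast
  let ?N = "real (CARD('p) * CARD('p))"
  show ?thesis
  proof
    show "d / ?N > 0" using \<open>d > 0\<close> by simp
    fix n and S :: "real^'p^'p" assume "\<And>i j. \<bar>S $ i $ j - Sigma $ i $ j\<bar> < d / ?N"
    then have "dist S Sigma < d" using dist_matrix_less_entrywise[of S Sigma "d / ?N"] by simp
    then show "\<bar>real n * (rho_star S n - rho_star Sigma n)\<bar> < e" by (rule close)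
  qed
qed

section \<open>Moments from a normal moment generating function\<close>

lemma cosh_series_nonneg: "0 \<le> (if even n then (x::real) ^ n /\<^sub>R fact n else 0)"
  by (simp add: zero_le_even_power)

lemma even_power_le_fact_cosh:
  fixes x :: real
  assumes "even k"
  shows "x ^ k \<le> fact k * cosh x"
proof -
  have "(\<Sum>n\<in>{k}. if even n then x ^ n /\<^sub>R fact n else 0) \<le> cosh x"
    using cosh_converges[of x] cosh_series_nonneg
    by (intro sum_le_suminf[THEN order_trans]) (auto simp: sums_iff)
  with assms show ?thesis by (simp add: field_simps)
qed

lemma cosh_ge_quadratic: "1 + x^2 / 2 \<le> cosh (x::real)"
proof -
  have "(\<Sum>n<3. if even n then x ^ n /\<^sub>R fact n else 0) \<le> cosh x"
    using cosh_converges[of x] cosh_series_nonneg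
    by (intro sum_le_suminf[THEN order_trans]) (auto simp: sums_iff)
  then show ?thesis by (simp add: numeral_3_eq_3 eval_nat_numeral)
qed

text \<open>The tail of the series of \<open>cosh x\<close> from degree 4 on is bounded termwise by \<open>x^4 / 24\<close>
  times the whole series.\<close>
lemma cosh_le_quartic: "cosh x \<le> 1 + x^2 / 2 + x^4 * cosh x / 24" for x :: real
proof -
  define f where "f n = (if even n then x ^ n /\<^sub>R fact n else 0)" for n
  have f: "f sums cosh x" unfolding f_def by (rule cosh_converges)
  have "(\<lambda>n. f (n + 4)) sums (cosh x - (1 + x^2 / 2))"
    using f by (subst sums_iff_shift) (simp add: f_def lessThan_nat_numeral)
  moreover have "(\<lambda>n. x^4 / 24 * f n) sums (x^4 / 24 * cosh x)"
    using f by (rule sums_mult)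
  moreover have "f (n + 4) \<le> x^4 / 24 * f n" for n
  proof (cases "even n")
    case True
    have "fact 4 * fact n \<le> (fact (n + 4) :: nat)"
      using fact_fact_dvd_fact[of 4 n] by (metis add.commute dvd_imp_le fact_gt_zero)
    then have "fact 4 * fact n \<le> (fact (n + 4) :: real)"
      by (metis of_nat_fact of_nat_le_iff of_nat_mult)
    then have "1 / fact (n + 4) \<le> (1 / 24) * (1 / fact n :: real)"
      by (simp add: field_simps fact_numeral)
    then have "x ^ n * x^4 * (1 / fact (n + 4)) \<le> x ^ n * x^4 * ((1 / 24) * (1 / fact n))"
      using True by (intro mult_left_mono) (simp_all add: zero_le_even_power)
    then show ?thesis using True by (simp add: f_def power_add field_simps)
  qed (simp add: f_def)
  ultimately have "cosh x - (1 + x^2 / 2) \<le> x^4 / 24 * cosh x"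
    by (rule sums_le[rotated 1])
  then show ?thesis by simp
qed

definition normal_mgf :: "'a measure \<Rightarrow> ('a \<Rightarrow> real) \<Rightarrow> real \<Rightarrow> bool" where
  "normal_mgf M Z q \<longleftrightarrow>
     (\<forall>s. integrable M (\<lambda>\<omega>. exp (s * Z \<omega>)) \<and> (\<integral>\<omega>. exp (s * Z \<omega>) \<partial>M) = exp (s^2 * q / 2))"

context prob_space
begin

lemma normal_mgf_cosh:
  assumes "normal_mgf M Z q"
  shows "integrable M (\<lambda>\<omega>. cosh (s * Z \<omega>))" "expectation (\<lambda>\<omega>. cosh (s * Z \<omega>)) = exp (s^2 * q / 2)"
  using assms[unfolded normal_mgf_def, rule_format, of s]
    assms[unfolded normal_mgf_def, rule_format, of "-s"]
  by (simp_all add: cosh_field_def)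

lemma normal_mgf_integrable_even_power:
  assumes "normal_mgf M Z q" "Z \<in> borel_measurable M" "even k"
  shows "integrable M (\<lambda>\<omega>. Z \<omega> ^ k)"
proof (rule Bochner_Integration.integrable_bound)
  show "integrable M (\<lambda>\<omega>. fact k * cosh (1 * Z \<omega>))"
    using normal_mgf_cosh(1)[OF assms(1)] by (rule integrable_mult_right)
  show "AE \<omega> in M. norm (Z \<omega> ^ k) \<le> norm (fact k * cosh (1 * Z \<omega>))"
    using assms(3) by (simp add: even_power_le_fact_cosh zero_le_even_power)
qed (use assms(2) in measurable)

lemma normal_mgf_mean:
  assumes mgf: "normal_mgf M Z q" and Z[measurable]: "Z \<in> borel_measurable M"
  shows "expectation Z = 0"
proof -
  have "integrable M (\<lambda>\<omega>. Z \<omega> ^ 2)"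
    by (rule normal_mgf_integrable_even_power[OF assms]) simp
  then have Zi: "integrable M Z"
    by (rule square_integrable_imp_integrable[OF Z])
  have "1 + s * expectation Z \<le> exp (s^2 * q / 2)" for s
  proof -
    have "expectation (\<lambda>\<omega>. 1 + s * Z \<omega>) \<le> expectation (\<lambda>\<omega>. exp (s * Z \<omega>))"
      using Zi mgf by (intro integral_mono) (auto simp: normal_mgf_def exp_ge_add_one_self)
    then show ?thesis using Zi mgf by (simp add: normal_mgf_def prob_space)
  qed
  \<comment> \<open>hence \<open>s \<mapsto> exp (s^2 q / 2) - s E[Z]\<close> is minimal at \<open>s = 0\<close>, where its derivative is \<open>-E[Z]\<close>\<close>
  then have min: "\<forall>s. \<bar>0 - s\<bar> < 1 \<longrightarrow>
      exp (0^2 * q / 2) - 0 * expectation Z \<le> exp (s^2 * q / 2) - s * expectation Z"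
    by (simp add: algebra_simps)
  have "DERIV (\<lambda>s. exp (s^2 * q / 2) - s * expectation Z) 0 :> - expectation Z"
    by (intro derivative_eq_intros) auto
  from DERIV_local_min[OF this zero_less_one min] show ?thesis by simp
qed

lemma normal_mgf_integrable_quartic_cosh:
  assumes mgf: "normal_mgf M Z q" and Z[measurable]: "Z \<in> borel_measurable M"
  shows "integrable M (\<lambda>\<omega>. Z \<omega> ^ 4 * cosh (Z \<omega>))"
proof (rule Bochner_Integration.integrable_bound)
  show "integrable M (\<lambda>\<omega>. 12 * (cosh (2 * Z \<omega>) + 1))"
    using normal_mgf_cosh(1)[OF mgf]
    by (intro integrable_mult_right Bochner_Integration.integrable_add) auto
  have "z ^ 4 * cosh z \<le> 12 * (cosh (2 * z) + 1)" for z :: real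
  proof -
    have "z ^ 4 * cosh z \<le> 24 * cosh z * cosh z"
      using even_power_le_fact_cosh[of 4 z] by (intro mult_right_mono) (auto simp: fact_numeral)
    also have "\<dots> = 12 * (cosh (2 * z) + 1)"
      using cosh_square_eq[of z] unfolding cosh_double power2_eq_square by (simp add: algebra_simps)
    finally show ?thesis .
  qed
  then show "AE \<omega> in M. norm (Z \<omega> ^ 4 * cosh (Z \<omega>)) \<le> norm (12 * (cosh (2 * Z \<omega>) + 1))"
    by (simp add: abs_mult zero_le_even_power add_nonneg_nonneg)
  have "(\<lambda>z::real. z ^ 4 * cosh z) \<in> borel_measurable borel"
    by (intro borel_measurable_continuous_onI continuous_intros)
  then show "(\<lambda>\<omega>. Z \<omega> ^ 4 * cosh (Z \<omega>)) \<in> borel_measurable M"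
    by (rule measurable_compose[OF Z])
qed

lemma normal_mgf_second_moment_bounds:
  assumes mgf: "normal_mgf M Z q" and Z[measurable]: "Z \<in> borel_measurable M"
  defines "m \<equiv> expectation (\<lambda>\<omega>. Z \<omega> ^ 2)" and "C \<equiv> expectation (\<lambda>\<omega>. Z \<omega> ^ 4 * cosh (Z \<omega>)) / 24"
  shows "1 + s^2 * m / 2 \<le> exp (s^2 * q / 2)"
    and "\<bar>s\<bar> \<le> 1 \<Longrightarrow> exp (s^2 * q / 2) \<le> 1 + s^2 * m / 2 + s^4 * C"
proof -
  have Z2: "integrable M (\<lambda>\<omega>. Z \<omega> ^ 2)"
    by (rule normal_mgf_integrable_even_power[OF mgf Z]) simp
  note Z4cosh = normal_mgf_integrable_quartic_cosh[OF mgf Z]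
  have "expectation (\<lambda>\<omega>. 1 + s^2 * Z \<omega> ^ 2 / 2) \<le> expectation (\<lambda>\<omega>. cosh (s * Z \<omega>))"
    using cosh_ge_quadratic[of "s * Z _"] Z2 normal_mgf_cosh(1)[OF mgf]
    by (intro integral_mono) (auto simp: power_mult_distrib)
  then show "1 + s^2 * m / 2 \<le> exp (s^2 * q / 2)"
    using Z2 by (simp add: normal_mgf_cosh(2)[OF mgf] m_def prob_space)
  assume "\<bar>s\<bar> \<le> 1"
  have "cosh (s * z) \<le> 1 + s^2 * z^2 / 2 + s^4 * (z ^ 4 * cosh z) / 24" for z
  proof -
    have "cosh (s * z) \<le> cosh z"
      using \<open>\<bar>s\<bar> \<le> 1\<close> by (subst (1 2) cosh_real_abs[symmetric], subst cosh_real_nonneg_le_iff)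
        (auto simp: abs_mult mult_left_le_one_le)
    then have "s^4 * z^4 * cosh (s * z) \<le> s^4 * z^4 * cosh z"
      by (intro mult_left_mono) (auto simp: zero_le_even_power)
    then show ?thesis
      using cosh_le_quartic[of "s * z"] by (simp add: power_mult_distrib algebra_simps)
  qed
  then have "expectation (\<lambda>\<omega>. cosh (s * Z \<omega>))
      \<le> expectation (\<lambda>\<omega>. 1 + s^2 * Z \<omega> ^ 2 / 2 + s^4 * (Z \<omega> ^ 4 * cosh (Z \<omega>)) / 24)"
    using Z2 Z4cosh normal_mgf_cosh(1)[OF mgf] by (intro integral_mono) auto
  then show "exp (s^2 * q / 2) \<le> 1 + s^2 * m / 2 + s^4 * C"
    using Z2 Z4cosh by (simp add: normal_mgf_cosh(2)[OF mgf] m_def C_def prob_space)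
qed

lemma normal_mgf_second_moment:
  assumes mgf: "normal_mgf M Z q" and Z[measurable]: "Z \<in> borel_measurable M"
  shows "expectation (\<lambda>\<omega>. Z \<omega> ^ 2) = q"
proof -
  define m where "m = expectation (\<lambda>\<omega>. Z \<omega> ^ 2)"
  define C where "C = expectation (\<lambda>\<omega>. Z \<omega> ^ 4 * cosh (Z \<omega>)) / 24"
  note lower = normal_mgf_second_moment_bounds(1)[OF mgf Z, folded m_def]
  note upper = normal_mgf_second_moment_bounds(2)[OF mgf Z, folded m_def C_def]
  \<comment> \<open>With \<open>u = s^2\<close>: \<open>m/2 \<le> (exp (u q / 2) - 1) / u \<le> m/2 + u C\<close>, and the middle tends to \<open>q/2\<close>.\<close>
  have "((\<lambda>u. exp (u * q / 2)) has_real_derivative q / 2) (at 0)"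
    by (auto intro!: derivative_eq_intros)
  then have "((\<lambda>u. (exp (u * q / 2) - 1) / u) \<longlongrightarrow> q / 2) (at 0)"
    by (simp add: has_field_derivative_iff)
  then have slope: "((\<lambda>u. (exp (u * q / 2) - 1) / u) \<longlongrightarrow> q / 2) (at_right 0)"
    by (auto intro: tendsto_mono[OF at_le])
  have bounds: "eventually (\<lambda>u. m / 2 \<le> (exp (u * q / 2) - 1) / u \<and>
      (exp (u * q / 2) - 1) / u \<le> m / 2 + u * C) (at_right 0)"
    using eventually_at_right_real[OF zero_less_one]
  proof eventually_elim
    case (elim u)
    then have sq: "sqrt u ^ 2 = u" and "\<bar>sqrt u\<bar> \<le> 1" by auto
    have "sqrt u ^ 4 = (sqrt u ^ 2) ^ 2" by (simp flip: power_mult)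
    with sq have "sqrt u ^ 4 = u * u" by (simp add: power2_eq_square)
    then show ?case
      using lower[of "sqrt u"] upper[of "sqrt u"] elim sq \<open>\<bar>sqrt u\<bar> \<le> 1\<close>
      by (simp add: field_simps)
  qed
  have "m / 2 \<le> q / 2"
    using bounds by (intro tendsto_le[OF trivial_limit_at_right_real slope tendsto_const])
      (auto elim: eventually_mono)
  moreover have "((\<lambda>u. m / 2 + u * C) \<longlongrightarrow> m / 2) (at_right 0)"
    by (auto intro!: tendsto_eq_intros)
  then have "q / 2 \<le> m / 2"
    using bounds
    by (intro tendsto_le[OF trivial_limit_at_right_real _ slope]) (auto elim: eventually_mono)
  ultimately show ?thesis by (simp add: m_def)
qed

end

lemma power2_mult_le_sum_power4: "(a * b) ^ 2 \<le> a ^ 4 + b ^ 4" for a b :: real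
proof -
  have "0 \<le> (a ^ 2 - b ^ 2) ^ 2" by simp
  then have "2 * (a ^ 2 * b ^ 2) \<le> a ^ 4 + b ^ 4"
    by (simp add: power2_eq_square power4_eq_xxxx algebra_simps)
  moreover have "0 \<le> a ^ 2 * b ^ 2" by simp
  ultimately show ?thesis unfolding power_mult_distrib by linarith
qed

lemma borel_measurable_vec_nth [measurable (raw)]:
  fixes f :: "'a \<Rightarrow> real^'n::finite"
  assumes "f \<in> borel_measurable M"
  shows "(\<lambda>x. f x $ i) \<in> borel_measurable M"
proof -
  have "(\<lambda>v::real^'n. v $ i) \<in> borel_measurable borel"
    by (intro borel_measurable_continuous_onI continuous_intros)
  then show ?thesis using assms by (rule measurable_compose[rotated])
qed

lemma inner_matrix_vector_transpose: "(A *v x) \<bullet> y = x \<bullet> (transpose A *v (y::real^'n::finite))"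
  by (metis dot_lmul_matrix inner_commute transpose_matrix_vector)

lemma mvn_density_tilt:
  fixes Sigma :: "real^'n::finite^'n"
  assumes sym: "transpose Sigma = Sigma" and inv: "invertible Sigma"
  shows "mvn_density mu Sigma x * exp (t \<bullet> (x - mu))
    = exp (t \<bullet> (Sigma *v t) / 2) * mvn_density mu Sigma (x - Sigma *v t)"
proof -
  define P where "P = matrix_inv Sigma"
  define y where "y = x - mu"
  define v where "v = Sigma *v t"
  have SP: "Sigma ** P = mat 1" and PS: "P ** Sigma = mat 1"
    using inv by (simp_all add: P_def matrix_inv_left matrix_inv_right)
  have "v \<bullet> (P *v y) = t \<bullet> y"
    by (simp add: v_def inner_matrix_vector_transpose sym matrix_vector_mul_assoc SP
        matrix_vector_mul_lid)
  moreover have "y \<bullet> (P *v v) = t \<bullet> y" "v \<bullet> (P *v v) = t \<bullet> v"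
    by (simp_all add: v_def matrix_vector_mul_assoc PS matrix_vector_mul_lid inner_commute)
  ultimately have quad: "- (1/2) * (y \<bullet> (P *v y)) + t \<bullet> y
      = t \<bullet> v / 2 + - (1/2) * ((y - v) \<bullet> (P *v (y - v)))"
    by (simp add: matrix_vector_mult_diff_distrib inner_diff_left inner_diff_right algebra_simps)
  define K where "K = sqrt ((2 * pi) ^ CARD('n) * det Sigma)"
  have density: "mvn_density mu Sigma z = exp (- (1/2) * ((z - mu) \<bullet> (P *v (z - mu)))) / K" for z
    by (simp add: mvn_density_def P_def K_def)
  have "mvn_density mu Sigma x * exp (t \<bullet> (x - mu)) = exp (- (1/2) * (y \<bullet> (P *v y)) + t \<bullet> y) / K"
    by (simp add: density y_def algebra_simps flip: exp_add)
  also have "\<dots> = exp (t \<bullet> v / 2) * (exp (- (1/2) * ((y - v) \<bullet> (P *v (y - v)))) / K)"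
    unfolding quad exp_add by simp
  also have "y - v = x - Sigma *v t - mu" by (simp add: y_def v_def)
  finally show ?thesis by (simp add: density v_def)
qed

context prob_space
begin

lemma mvn_mgf:
  fixes Sigma :: "real^'n::finite^'n"
  assumes sym: "transpose Sigma = Sigma" and pd: "posdef Sigma"
    and D: "distributed M lborel X (\<lambda>x. ennreal (mvn_density mu Sigma x))"
  shows "integrable M (\<lambda>\<omega>. exp (t \<bullet> (X \<omega> - mu)))"
    "expectation (\<lambda>\<omega>. exp (t \<bullet> (X \<omega> - mu))) = exp (t \<bullet> (Sigma *v t) / 2)"
proof -
  let ?\<phi> = "mvn_density mu Sigma"
  have \<phi>[measurable]: "?\<phi> \<in> borel_measurable borel"
    unfolding mvn_density_def inner_vec_def matrix_vector_mult_def divide_inverse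
    by (intro borel_measurable_continuous_onI continuous_intros)
  have total: "(\<integral>\<^sup>+x. ennreal (?\<phi> x) \<partial>lborel) = 1"
    using distributed_nn_integral[OF D, of "\<lambda>_. 1"] by (simp add: emeasure_space_1)
  have shifted: "(\<integral>\<^sup>+x. ennreal (?\<phi> (x - a)) \<partial>lborel) = 1" for a
    using total by (subst (asm) lborel_distr_plus[of "- a", symmetric]) (simp add: nn_integral_distr)
  have "(\<integral>\<^sup>+\<omega>. ennreal (exp (t \<bullet> (X \<omega> - mu))) \<partial>M)
      = (\<integral>\<^sup>+x. ennreal (?\<phi> x) * ennreal (exp (t \<bullet> (x - mu))) \<partial>lborel)"
    by (rule distributed_nn_integral[OF D, symmetric]) measurable
  also have "\<dots> = (\<integral>\<^sup>+x. ennreal (exp (t \<bullet> (Sigma *v t) / 2)) * ennreal (?\<phi> (x - Sigma *v t)) \<partial>lborel)"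
    using mvn_density_tilt[OF sym posdef_invertible[OF pd]]
    by (simp flip: ennreal_mult' ennreal_mult'')
  also have "\<dots> = ennreal (exp (t \<bullet> (Sigma *v t) / 2))"
    by (subst nn_integral_cmult) (simp_all add: shifted)
  finally show "integrable M (\<lambda>\<omega>. exp (t \<bullet> (X \<omega> - mu)))"
    "expectation (\<lambda>\<omega>. exp (t \<bullet> (X \<omega> - mu))) = exp (t \<bullet> (Sigma *v t) / 2)"
    using distributed_measurable[OF D] by (subst (asm) nn_integral_eq_integrable; simp)+
qed

lemma mvn_normal_mgf:
  fixes Sigma :: "real^'n::finite^'n"
  assumes "transpose Sigma = Sigma" "posdef Sigma"
    and "distributed M lborel X (\<lambda>x. ennreal (mvn_density mu Sigma x))"
  shows "normal_mgf M (\<lambda>\<omega>. t \<bullet> (X \<omega> - mu)) (t \<bullet> (Sigma *v t))"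
  unfolding normal_mgf_def using mvn_mgf[OF assms, of "s *\<^sub>R t" for s]
  by (simp add: matrix_vector_mult_scaleR power2_eq_square mult.assoc)

lemma mvn_linear_moments:
  fixes Sigma :: "real^'n::finite^'n"
  assumes "transpose Sigma = Sigma" "posdef Sigma"
    and D: "distributed M lborel X (\<lambda>x. ennreal (mvn_density mu Sigma x))"
  shows "expectation (\<lambda>\<omega>. t \<bullet> (X \<omega> - mu)) = 0"
    "expectation (\<lambda>\<omega>. (t \<bullet> (X \<omega> - mu)) ^ 2) = t \<bullet> (Sigma *v t)"
    "even k \<Longrightarrow> integrable M (\<lambda>\<omega>. (t \<bullet> (X \<omega> - mu)) ^ k)"
proof -
  have [measurable]: "X \<in> borel_measurable M"
    using distributed_measurable[OF D] by simp
  have "(\<lambda>\<omega>. t \<bullet> (X \<omega> - mu)) \<in> borel_measurable M"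
    by measurable
  note mgf = mvn_normal_mgf[OF assms] this
  show "expectation (\<lambda>\<omega>. t \<bullet> (X \<omega> - mu)) = 0"
    "expectation (\<lambda>\<omega>. (t \<bullet> (X \<omega> - mu)) ^ 2) = t \<bullet> (Sigma *v t)"
    "even k \<Longrightarrow> integrable M (\<lambda>\<omega>. (t \<bullet> (X \<omega> - mu)) ^ k)"
    by (rule normal_mgf_mean[OF mgf], rule normal_mgf_second_moment[OF mgf],
        rule normal_mgf_integrable_even_power[OF mgf])
qed

lemma mvn_moments:
  fixes Sigma :: "real^'n::finite^'n"
  assumes sym: "transpose Sigma = Sigma" and pd: "posdef Sigma"
    and D: "distributed M lborel X (\<lambda>x. ennreal (mvn_density mu Sigma x))"
  defines "Y \<equiv> \<lambda>i \<omega>. (X \<omega> - mu) $ i"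
  shows "expectation (Y i) = 0" "integrable M (\<lambda>\<omega>. Y i \<omega> ^ 2)"
    "expectation (\<lambda>\<omega>. Y i \<omega> * Y j \<omega>) = Sigma $ i $ j"
    "integrable M (\<lambda>\<omega>. (Y i \<omega> * Y j \<omega>) ^ 2)"
proof -
  have [measurable]: "X \<in> borel_measurable M"
    using distributed_measurable[OF D] by simp
  note linear = mvn_linear_moments[OF sym pd D]
  have axis: "axis i 1 \<bullet> (X \<omega> - mu) = Y i \<omega>" for i \<omega>
    by (simp add: Y_def inner_axis')
  have quad: "axis i 1 \<bullet> (Sigma *v axis j 1) = Sigma $ i $ j" for i j
    by (simp add: inner_axis' matrix_vector_mult_basis column_def)
  show "expectation (Y i) = 0" "integrable M (\<lambda>\<omega>. Y i \<omega> ^ 2)"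
    using linear(1)[of "axis i 1"] linear(3)[of 2 "axis i 1"] by (simp_all add: axis)
  have Y2: "integrable M (\<lambda>\<omega>. Y i \<omega> ^ 2)" "expectation (\<lambda>\<omega>. Y i \<omega> ^ 2) = Sigma $ i $ i" for i
    using linear(3)[of 2 "axis i 1"] linear(2)[of "axis i 1"] by (simp_all add: axis quad)
  have "Sigma $ j $ i = Sigma $ i $ j"
    using sym by (metis transpose_def vec_lambda_beta)
  then have "expectation (\<lambda>\<omega>. (Y i \<omega> + Y j \<omega>) ^ 2) = Sigma $ i $ i + 2 * Sigma $ i $ j + Sigma $ j $ j"
    "integrable M (\<lambda>\<omega>. (Y i \<omega> + Y j \<omega>) ^ 2)"
    using linear(2)[of "axis i 1 + axis j 1"] linear(3)[of 2 "axis i 1 + axis j 1"]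
    by (simp_all add: inner_add_left inner_add_right matrix_vector_right_distrib axis quad)
  moreover have "(\<lambda>\<omega>. Y i \<omega> * Y j \<omega>) = (\<lambda>\<omega>. ((Y i \<omega> + Y j \<omega>) ^ 2 - Y i \<omega> ^ 2 - Y j \<omega> ^ 2) / 2)"
    by (simp add: fun_eq_iff power2_eq_square algebra_simps)
  ultimately show "expectation (\<lambda>\<omega>. Y i \<omega> * Y j \<omega>) = Sigma $ i $ j"
    using Y2[of i] Y2[of j] by simp
  show "integrable M (\<lambda>\<omega>. (Y i \<omega> * Y j \<omega>) ^ 2)"
  proof (rule Bochner_Integration.integrable_bound)
    show "integrable M (\<lambda>\<omega>. Y i \<omega> ^ 4 + Y j \<omega> ^ 4)"
      using linear(3)[of 4 "axis i 1"] linear(3)[of 4 "axis j 1"] by (simp add: axis)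
    show "AE \<omega> in M. norm ((Y i \<omega> * Y j \<omega>) ^ 2) \<le> norm (Y i \<omega> ^ 4 + Y j \<omega> ^ 4)"
      by (simp add: power2_mult_le_sum_power4 zero_le_even_power)
  qed (unfold Y_def, measurable)
qed

end

lemma average_centered_products:
  fixes u v :: "nat \<Rightarrow> real"
  shows "(\<Sum>k<n. (u k - (\<Sum>l<n. u l) / n) * (v k - (\<Sum>l<n. v l) / n)) / n
       = (\<Sum>k<n. u k * v k) / n - ((\<Sum>k<n. u k) / n) * ((\<Sum>k<n. v k) / n)"
proof (cases "n = 0")
  case False
  define a b where "a = (\<Sum>l<n. u l) / n" and "b = (\<Sum>l<n. v l) / n"
  have "(\<Sum>l<n. u l) = n * a" "(\<Sum>l<n. v l) = n * b"
    using False by (simp_all add: a_def b_def)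
  then have "(\<Sum>k<n. (u k - a) * (v k - b)) = (\<Sum>k<n. u k * v k) - n * a * b"
    by (simp add: algebra_simps sum.distrib sum_subtractf flip: sum_distrib_left sum_distrib_right)
  then show ?thesis
    using False by (simp add: a_def[symmetric] b_def[symmetric] field_simps)
qed simp

lemma sample_cov_nth:
  fixes x :: "nat \<Rightarrow> real^'p::finite"
  shows "sample_cov x n $ i $ j = (\<Sum>k<n. (x k - c) $ i * (x k - c) $ j) / n
    - ((\<Sum>k<n. (x k - c) $ i) / n) * ((\<Sum>k<n. (x k - c) $ j) / n)"
proof (cases "n = 0")
  case False
  have centered: "x k $ i - (\<Sum>l<n. x l $ i) / n = (x k - c) $ i - (\<Sum>l<n. (x l - c) $ i) / n" for k i
    using False by (simp add: sum_subtractf field_simps)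
  have "sample_cov x n $ i $ j
      = (\<Sum>k<n. (x k $ i - (\<Sum>l<n. x l $ i) / n) * (x k $ j - (\<Sum>l<n. x l $ j) / n)) / n"
    by (simp add: sample_cov_def outer_def Let_def divide_inverse mult.commute)
  also have "\<dots> = (\<Sum>k<n. ((x k - c) $ i - (\<Sum>l<n. (x l - c) $ i) / n)
      * ((x k - c) $ j - (\<Sum>l<n. (x l - c) $ j) / n)) / n"
    unfolding centered ..
  finally show ?thesis by (simp only: average_centered_products)
qed (simp add: sample_cov_def)

lemma sample_cov_close:
  fixes x :: "nat \<Rightarrow> real^'p::finite"
  assumes "\<And>i j. \<bar>(\<Sum>k<n. (x k - c) $ i * (x k - c) $ j) / n - S $ i $ j\<bar> < \<delta>"
    and "\<And>i. \<bar>(\<Sum>k<n. (x k - c) $ i) / n\<bar> < \<delta>" and "\<delta> \<le> 1"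
  shows "\<bar>sample_cov x n $ i $ j - S $ i $ j\<bar> < 2 * \<delta>"
proof -
  let ?A = "(\<Sum>k<n. (x k - c) $ i * (x k - c) $ j) / n - S $ i $ j"
    and ?b = "(\<Sum>k<n. (x k - c) $ i) / n" and ?c = "(\<Sum>k<n. (x k - c) $ j) / n"
  have "0 \<le> \<delta>" using assms(2)[of i] abs_ge_zero[of ?b] by linarith
  then have "\<bar>?b\<bar> * \<bar>?c\<bar> \<le> \<delta> * 1"
    using assms(2)[of i] assms(2)[of j] assms(3) by (intro mult_mono) auto
  moreover have "\<bar>sample_cov x n $ i $ j - S $ i $ j\<bar> \<le> \<bar>?A\<bar> + \<bar>?b\<bar> * \<bar>?c\<bar>"
    unfolding sample_cov_nth[where c = c] abs_mult[symmetric]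
    by (rule order_trans[OF _ abs_triangle_ineq4]) simp
  ultimately show ?thesis
    using assms(1)[of i j] by simp
qed

section \<open>Weak law of large numbers\<close>

context prob_space
begin

lemma indep_vars_mult:
  fixes W :: "'i \<Rightarrow> 'a \<Rightarrow> real"
  assumes indep: "indep_vars (\<lambda>_. borel) W J" and "k \<in> J" "l \<in> J" "k \<noteq> l"
    and "integrable M (W k)" "integrable M (W l)"
  shows "integrable M (\<lambda>\<omega>. W k \<omega> * W l \<omega>)"
    "expectation (\<lambda>\<omega>. W k \<omega> * W l \<omega>) = expectation (W k) * expectation (W l)"
proof -
  have "indep_vars (\<lambda>_. borel) W {k, l}"
    using indep_vars_subset[OF indep] assms(2,3) by auto
  then show "integrable M (\<lambda>\<omega>. W k \<omega> * W l \<omega>)"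
    "expectation (\<lambda>\<omega>. W k \<omega> * W l \<omega>) = expectation (W k) * expectation (W l)"
    using indep_vars_integrable[of "{k, l}" W] indep_vars_lebesgue_integral[of "{k, l}" W] assms(4-)
    by auto
qed

lemma variance_sum_indep:
  fixes W :: "'i \<Rightarrow> 'a \<Rightarrow> real"
  assumes "finite J" and indep: "indep_vars (\<lambda>_. borel) W J"
    and L2: "\<And>k. k \<in> J \<Longrightarrow> integrable M (\<lambda>\<omega>. W k \<omega> ^ 2)"
  shows "integrable M (\<lambda>\<omega>. (\<Sum>k\<in>J. W k \<omega>) ^ 2)"
    "variance (\<lambda>\<omega>. \<Sum>k\<in>J. W k \<omega>) = (\<Sum>k\<in>J. variance (W k))"
proof -
  have L1: "integrable M (W k)" if "k \<in> J" for k
  proof (rule square_integrable_imp_integrable)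
    show "W k \<in> borel_measurable M" using indep that unfolding indep_vars_def by blast
  qed (rule L2[OF that])
  have prod: "integrable M (\<lambda>\<omega>. W k \<omega> * W l \<omega>)" if "k \<in> J" "l \<in> J" for k l
    using L2[of k] indep_vars_mult(1)[OF indep _ _ _ L1 L1] that
    by (cases "k = l") (auto simp: power2_eq_square)
  have cov: "expectation (\<lambda>\<omega>. W k \<omega> * W l \<omega>) - expectation (W k) * expectation (W l)
      = (if k = l then variance (W k) else 0)" if "k \<in> J" "l \<in> J" for k l
  proof (cases "k = l")
    case True
    then show ?thesis using variance_eq[OF L1 L2, OF that(1) that(1)] by (simp add: power2_eq_square)
  qed (use indep_vars_mult(2)[OF indep that _ L1 L1] that in simp)
  have square: "(\<Sum>k\<in>J. W k \<omega>) ^ 2 = (\<Sum>k\<in>J. \<Sum>l\<in>J. W k \<omega> * W l \<omega>)" for \<omega>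
    by (simp add: power2_eq_square sum_product)
  show sq: "integrable M (\<lambda>\<omega>. (\<Sum>k\<in>J. W k \<omega>) ^ 2)"
    unfolding square using prod by auto
  have "integrable M (\<lambda>\<omega>. \<Sum>k\<in>J. W k \<omega>)" using L1 by auto
  then have "variance (\<lambda>\<omega>. \<Sum>k\<in>J. W k \<omega>)
      = expectation (\<lambda>\<omega>. (\<Sum>k\<in>J. W k \<omega>) ^ 2) - (expectation (\<lambda>\<omega>. \<Sum>k\<in>J. W k \<omega>))^2"
    using sq by (rule variance_eq)
  also have "\<dots> = (\<Sum>k\<in>J. \<Sum>l\<in>J. expectation (\<lambda>\<omega>. W k \<omega> * W l \<omega>) - expectation (W k) * expectation (W l))"
    using L1 prod by (simp add: square power2_eq_square sum_product sum_subtractf)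
  also have "\<dots> = (\<Sum>k\<in>J. variance (W k))"
    using assms(1) by (simp add: cov if_distrib sum.delta cong: sum.cong)
  finally show "variance (\<lambda>\<omega>. \<Sum>k\<in>J. W k \<omega>) = (\<Sum>k\<in>J. variance (W k))" .
qed

lemma identically_distributed_integral:
  fixes U V :: "'a \<Rightarrow> 'b::topological_space" and g :: "'b \<Rightarrow> real"
  assumes "distr M borel U = distr M borel V"
    and [measurable]: "U \<in> borel_measurable M" "V \<in> borel_measurable M" "g \<in> borel_measurable borel"
  shows "integrable M (\<lambda>\<omega>. g (U \<omega>)) \<longleftrightarrow> integrable M (\<lambda>\<omega>. g (V \<omega>))"
    "expectation (\<lambda>\<omega>. g (U \<omega>)) = expectation (\<lambda>\<omega>. g (V \<omega>))"
  using integrable_distr_eq[of U M borel g] integrable_distr_eq[of V M borel g]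
    integral_distr[of U M borel g] integral_distr[of V M borel g] assms(1)
  by simp_all

lemma prob_average_deviation_le:
  fixes W :: "nat \<Rightarrow> 'a \<Rightarrow> real"
  assumes indep: "indep_vars (\<lambda>_. borel) W UNIV"
    and ident: "\<And>k. distr M borel (W k) = distr M borel (W 0)"
    and L2: "integrable M (\<lambda>\<omega>. W 0 \<omega> ^ 2)" and e: "e > 0" and n: "n \<ge> 1"
  shows "prob {\<omega> \<in> space M. \<bar>(\<Sum>k<n. W k \<omega>) / real n - expectation (W 0)\<bar> > e}
    \<le> variance (W 0) / e^2 / real n"
proof -
  define m where "m = expectation (W 0)"
  define V where "V = variance (W 0)"
  have W[measurable]: "W k \<in> borel_measurable M" for k
    using indep unfolding indep_vars_def by blast
  note same = identically_distributed_integral[OF ident W W]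
  have L2k: "integrable M (\<lambda>\<omega>. W k \<omega> ^ 2)" for k
    using same(1)[of "\<lambda>x. x ^ 2" k] L2 by simp
  have mean: "expectation (W k) = m" for k
    using same(2)[of "\<lambda>x. x" k] by (simp add: m_def)
  have var: "expectation (\<lambda>\<omega>. (W k \<omega> - m)\<^sup>2) = V" for k
    using same(2)[of "\<lambda>x. (x - m)\<^sup>2" k] mean[of k] by (simp add: V_def m_def)
  have indep_n: "indep_vars (\<lambda>_. borel) W {..<n}"
    using indep_vars_subset[OF indep] by simp
  have sum: "expectation (\<lambda>\<omega>. \<Sum>k<n. W k \<omega>) = real n * m"
    "variance (\<lambda>\<omega>. \<Sum>k<n. W k \<omega>) = real n * V" "integrable M (\<lambda>\<omega>. (\<Sum>k<n. W k \<omega>) ^ 2)"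
    using square_integrable_imp_integrable[OF W L2k] variance_sum_indep[OF finite_lessThan indep_n L2k]
    by (simp_all add: mean var)
  have "real n * e \<le> \<bar>(\<Sum>k<n. W k \<omega>) - real n * m\<bar>"
    if "\<bar>(\<Sum>k<n. W k \<omega>) / real n - m\<bar> > e" for \<omega>
  proof -
    have "(\<Sum>k<n. W k \<omega>) / real n - m = ((\<Sum>k<n. W k \<omega>) - real n * m) / real n"
      using n by (simp add: field_simps)
    with that n show ?thesis by (simp add: abs_divide pos_less_divide_eq mult.commute)
  qed
  then have "{\<omega> \<in> space M. \<bar>(\<Sum>k<n. W k \<omega>) / real n - m\<bar> > e}
      \<subseteq> {\<omega> \<in> space M. \<bar>(\<Sum>k<n. W k \<omega>) - expectation (\<lambda>\<omega>. \<Sum>k<n. W k \<omega>)\<bar> \<ge> real n * e}"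
    by (auto simp: sum(1))
  then have "prob {\<omega> \<in> space M. \<bar>(\<Sum>k<n. W k \<omega>) / real n - m\<bar> > e}
      \<le> variance (\<lambda>\<omega>. \<Sum>k<n. W k \<omega>) / (real n * e)^2"
    using e n by (intro order_trans[OF finite_measure_mono Chebyshev_inequality]) (auto simp: sum(3))
  also have "\<dots> = V / e^2 / real n"
    unfolding sum(2) using n by (simp add: power2_eq_square)
  finally show ?thesis by (simp add: m_def V_def)
qed

theorem weak_law_of_large_numbers:
  fixes W :: "nat \<Rightarrow> 'a \<Rightarrow> real"
  assumes "indep_vars (\<lambda>_. borel) W UNIV"
    and "\<And>k. distr M borel (W k) = distr M borel (W 0)"
    and "integrable M (\<lambda>\<omega>. W 0 \<omega> ^ 2)"
  shows "conv_prob_zero M (\<lambda>n \<omega>. (\<Sum>k<n. W k \<omega>) / real n - expectation (W 0))"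
  unfolding conv_prob_zero_def
proof (intro allI impI)
  fix e :: real assume "e > 0"
  show "(\<lambda>n. prob {\<omega> \<in> space M. \<bar>(\<Sum>k<n. W k \<omega>) / real n - expectation (W 0)\<bar> > e}) \<longlonglongrightarrow> 0"
    using prob_average_deviation_le[OF assms \<open>e > 0\<close>]
    by (intro tendsto_sandwich[OF _ _ tendsto_const lim_const_over_n[of "variance (W 0) / e^2"]])
      (auto intro: eventually_sequentiallyI[of 1])
qed

lemma conv_prob_zero_if_controlled:
  fixes Y :: "'i::finite \<Rightarrow> nat \<Rightarrow> 'a \<Rightarrow> real" and Z :: "nat \<Rightarrow> 'a \<Rightarrow> real"
  assumes conv: "\<And>i. conv_prob_zero M (Y i)" and meas: "\<And>i n. Y i n \<in> borel_measurable M"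
    and control: "\<And>e. e > 0 \<Longrightarrow> \<exists>d>0. \<forall>n \<omega>. (\<forall>i. \<bar>Y i n \<omega>\<bar> < d) \<longrightarrow> \<bar>Z n \<omega>\<bar> \<le> e"
  shows "conv_prob_zero M Z"
  unfolding conv_prob_zero_def
proof (intro allI impI)
  fix e :: real assume "e > 0"
  then obtain d where "d > 0" and dZ: "\<And>n \<omega>. \<forall>i. \<bar>Y i n \<omega>\<bar> < d \<Longrightarrow> \<bar>Z n \<omega>\<bar> \<le> e"
    using control by blast
  let ?B = "\<lambda>n i. {\<omega> \<in> space M. \<bar>Y i n \<omega>\<bar> > d / 2}"
  have bound: "prob {\<omega> \<in> space M. \<bar>Z n \<omega>\<bar> > e} \<le> (\<Sum>i\<in>UNIV. prob (?B n i))" for n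
  proof -
    have "{\<omega> \<in> space M. \<bar>Z n \<omega>\<bar> > e} \<subseteq> (\<Union>i. ?B n i)"
    proof safe
      fix \<omega> assume "\<omega> \<in> space M" "e < \<bar>Z n \<omega>\<bar>"
      then obtain i where "d \<le> \<bar>Y i n \<omega>\<bar>" using dZ[of n \<omega>] by (meson not_less linorder_not_le)
      then show "\<omega> \<in> (\<Union>i. ?B n i)" using \<open>\<omega> \<in> space M\<close> \<open>d > 0\<close> by (intro UN_I[of i]) auto
    qed
    moreover have "?B n i \<in> sets M" for i
      using meas by measurable
    ultimately show ?thesis
      by (intro order_trans[OF finite_measure_mono finite_measure_subadditive_finite]) auto
  qed
  have B: "(\<lambda>n. prob (?B n i)) \<longlonglongrightarrow> 0" for i
    by (rule conv[of i, unfolded conv_prob_zero_def, rule_format]) (use \<open>d > 0\<close> in simp)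
  have lim: "(\<lambda>n. \<Sum>i\<in>UNIV. prob (?B n i)) \<longlonglongrightarrow> 0"
    using B by (rule tendsto_null_sum)
  show "(\<lambda>n. prob {\<omega> \<in> space M. \<bar>Z n \<omega>\<bar> > e}) \<longlonglongrightarrow> 0"
    by (rule tendsto_sandwich[OF _ _ tendsto_const lim]) (simp, intro always_eventually allI bound)
qed

end

context prob_space
begin

lemma mvn_sample_moments_conv:
  fixes X :: "nat \<Rightarrow> 'a \<Rightarrow> real^'n::finite" and Sigma :: "real^'n^'n"
  assumes sym: "transpose Sigma = Sigma" and pd: "posdef Sigma"
    and D: "\<And>k. distributed M lborel (X k) (\<lambda>x. ennreal (mvn_density mu Sigma x))"
    and indep: "indep_vars (\<lambda>_. borel) X UNIV"
  shows "conv_prob_zero M (\<lambda>n \<omega>. (\<Sum>k<n. (X k \<omega> - mu) $ i * (X k \<omega> - mu) $ j) / n - Sigma $ i $ j)"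
    "conv_prob_zero M (\<lambda>n \<omega>. (\<Sum>k<n. (X k \<omega> - mu) $ i) / n)"
proof -
  have X[measurable]: "X k \<in> borel_measurable M" for k
    using distributed_measurable[OF D] by simp
  have "distr M borel (X k) = distr M lborel (X k)" for k
    by (rule distr_cong) auto
  then have ident: "distr M borel (X k) = distr M borel (X 0)" for k
    using distributed_distr_eq_density[OF D] by metis
  have wlln: "conv_prob_zero M (\<lambda>n \<omega>. (\<Sum>k<n. g (X k \<omega>)) / n - expectation (\<lambda>\<omega>. g (X 0 \<omega>)))"
    if g[measurable]: "g \<in> borel_measurable borel" and "integrable M (\<lambda>\<omega>. g (X 0 \<omega>) ^ 2)" for g
  proof (rule weak_law_of_large_numbers)
    show "indep_vars (\<lambda>_. borel) (\<lambda>k \<omega>. g (X k \<omega>)) UNIV"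
      using indep_vars_compose2[OF indep, of "\<lambda>_. g"] by simp
    show "distr M borel (\<lambda>\<omega>. g (X k \<omega>)) = distr M borel (\<lambda>\<omega>. g (X 0 \<omega>))" for k
      using distr_distr[of g borel borel "X k" M] distr_distr[of g borel borel "X 0" M] ident[of k]
      by (simp add: comp_def)
  qed (rule that)
  have g: "(\<lambda>v. (v - mu) $ i * (v - mu) $ j) \<in> borel_measurable borel"
    "(\<lambda>v. (v - mu) $ i) \<in> borel_measurable borel"
    by (intro borel_measurable_continuous_onI continuous_intros)+
  show "conv_prob_zero M (\<lambda>n \<omega>. (\<Sum>k<n. (X k \<omega> - mu) $ i * (X k \<omega> - mu) $ j) / n - Sigma $ i $ j)"
    using wlln[OF g(1)] mvn_moments(3,4)[OF sym pd D] by simp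
  show "conv_prob_zero M (\<lambda>n \<omega>. (\<Sum>k<n. (X k \<omega> - mu) $ i) / n)"
    using wlln[OF g(2)] mvn_moments(1,2)[OF sym pd D] by simp
qed

lemma mvn_sample_cov_continuous_mapping:
  fixes X :: "nat \<Rightarrow> 'a \<Rightarrow> real^'n::finite" and Sigma :: "real^'n^'n" and Z :: "nat \<Rightarrow> 'a \<Rightarrow> real"
  assumes sym: "transpose Sigma = Sigma" and pd: "posdef Sigma"
    and D: "\<And>k. distributed M lborel (X k) (\<lambda>x. ennreal (mvn_density mu Sigma x))"
    and indep: "indep_vars (\<lambda>_. borel) X UNIV"
    and control: "\<And>e. e > 0 \<Longrightarrow> \<exists>d>0. \<forall>n \<omega>.
      (\<forall>i j. \<bar>sample_cov (\<lambda>k. X k \<omega>) n $ i $ j - Sigma $ i $ j\<bar> < d) \<longrightarrow> \<bar>Z n \<omega>\<bar> \<le> e"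
  shows "conv_prob_zero M Z"
proof -
  have [measurable]: "X k \<in> borel_measurable M" for k
    using distributed_measurable[OF D] by simp
  \<comment> \<open>the sample moments about \<open>mu\<close>; each entry of the sample covariance is a polynomial in them\<close>
  define Y where "Y a n \<omega> = (case a of
      Inl (i, j) \<Rightarrow> (\<Sum>k<n. (X k \<omega> - mu) $ i * (X k \<omega> - mu) $ j) / n - Sigma $ i $ j
    | Inr i \<Rightarrow> (\<Sum>k<n. (X k \<omega> - mu) $ i) / n)" for a :: "('n \<times> 'n) + 'n" and n \<omega>
  show ?thesis
  proof (rule conv_prob_zero_if_controlled)
    show "conv_prob_zero M (Y a)" for a
      using mvn_sample_moments_conv[OF sym pd D indep]
      by (cases a) (auto simp: Y_def[abs_def] split: prod.split)
    show "Y a n \<in> borel_measurable M" for a n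
      unfolding Y_def[abs_def] by (cases a) (auto split: prod.split)
    fix e :: real assume "e > 0"
    then obtain d where "d > 0" and close: "\<And>n \<omega>.
        \<forall>i j. \<bar>sample_cov (\<lambda>k. X k \<omega>) n $ i $ j - Sigma $ i $ j\<bar> < d \<Longrightarrow> \<bar>Z n \<omega>\<bar> \<le> e"
      using control by blast
    have "\<bar>sample_cov (\<lambda>k. X k \<omega>) n $ i $ j - Sigma $ i $ j\<bar> < d"
      if small: "\<forall>a. \<bar>Y a n \<omega>\<bar> < min 1 (d / 2)" for n \<omega> i j
    proof -
      have "\<bar>sample_cov (\<lambda>k. X k \<omega>) n $ i $ j - Sigma $ i $ j\<bar> < 2 * min 1 (d / 2)"
        using small[rule_format, of "Inl _"] small[rule_format, of "Inr _"]
        by (intro sample_cov_close[where c = mu]) (auto simp: Y_def)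
      then show ?thesis by linarith
    qed
    then show "\<exists>d>0. \<forall>n \<omega>. (\<forall>a. \<bar>Y a n \<omega>\<bar> < d) \<longrightarrow> \<bar>Z n \<omega>\<bar> \<le> e"
      using \<open>d > 0\<close> close by (intro exI[of _ "min 1 (d / 2)"]) auto
  qed
qed

end

theorem theorem5:
  fixes M :: "'a measure" and X :: "nat \<Rightarrow> 'a \<Rightarrow> real^'p"
    and mu :: "real^'p" and Sigma :: "real^'p^'p"
  assumes "prob_space M"
    and "transpose Sigma = Sigma"
    and "\<forall>x. x \<noteq> 0 \<longrightarrow> x \<bullet> (Sigma *v x) > 0"
    and "\<forall>i. distributed M lborel (X i) (\<lambda>x. ennreal (mvn_density mu Sigma x))"
    and "prob_space.indep_vars M (\<lambda>_. borel) X UNIV"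
    and "\<forall>n\<ge>1. 0 < rho_star Sigma n \<and> rho_star Sigma n < 1"
  shows "conv_prob_zero M
           (\<lambda>n \<omega>. real n * (rho_star (sample_cov (\<lambda>i. X i \<omega>) n) n - rho_star Sigma n))"
proof -
  interpret prob_space M by (rule assms(1))
  have pd: "posdef Sigma" using assms(3) by (simp add: posdef_def)
  show ?thesis
  proof (rule mvn_sample_cov_continuous_mapping[OF assms(2) pd _ assms(5)])
    show "distributed M lborel (X k) (\<lambda>x. ennreal (mvn_density mu Sigma x))" for k
      using assms(4) by blast
    fix e :: real assume "e > 0"
    then obtain d where "d > 0" and close: "\<And>n S. (\<And>i j. \<bar>S $ i $ j - Sigma $ i $ j\<bar> < d) \<Longrightarrow>
        \<bar>real n * (rho_star S n - rho_star Sigma n)\<bar> < e"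
      using rho_star_entrywise_equicontinuous[OF pd] assms(6) by (metis order_refl)
    then show "\<exists>d>0. \<forall>n \<omega>. (\<forall>i j. \<bar>sample_cov (\<lambda>k. X k \<omega>) n $ i $ j - Sigma $ i $ j\<bar> < d) \<longrightarrow>
        \<bar>real n * (rho_star (sample_cov (\<lambda>i. X i \<omega>) n) n - rho_star Sigma n)\<bar> \<le> e"
      by (intro exI[of _ d]) (auto intro: less_imp_le)
  qed
qed

end
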